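(* Let $G=(V,E)$ be an undirected graph with $m$ edges, positive capacities $u_e$, and maximum $s$-$t$ flow value $F^*$. Let $0<\epsilon<1/2$, let $w\in\mathbb{R}^E$ with $w_e>0$ for all $e$, write $|w|_1=\sum_e w_e$, and set $r_e=\frac{1}{u_e^2}\big(w_e+\frac{\epsilon|w|_1}{3m}\big)$. Then: (1) If $0<F\le F^*$ and $\tilde f$ is an $s$-$t$ flow of value $F$ with $\mathcal{E}_r(\tilde f)\le(1+\epsilon/3)\mathcal{E}_r(f)$, where $f$ is the electrical $s$-$t$ flow of value $F$ with respect to $r$, then $\mathcal{E}_r(\tilde f)\le(1+\epsilon)|w|_1$. (2) Every $s$-$t$ flow $g$ with $\mathcal{E}_r(g)\le(1+\epsilon)|w|_1$ satisfies $\sum_e w_e\,\mathrm{cong}_g(e)\le(1+\epsilon)|w|_1$ and $\max_e\mathrm{cong}_g(e)\le 3\sqrt{m/\epsilon}$.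
   Context: Edges are arbitrarily oriented; an $s$-$t$ flow is $f:E\to\mathbb{R}$ conserving flow at all vertices other than $s,t$, with value the net flow out of $s$. $F^*$ is the maximum value of an $s$-$t$ flow with $|f(e)|\le u_e$ for all $e$. $\mathrm{cong}_f(e)=|f(e)|/u_e$. The energy is $\mathcal{E}_r(f)=\sum_e r_e f(e)^2$, and the electrical $s$-$t$ flow of value $F$ is the $s$-$t$ flow of value $F$ minimizing $\mathcal{E}_r$. *)

theory Defs
  imports "HOL-Analysis.Analysis"
begin

text \<open>A (multi)graph with finite edge set E; each edge e is arbitrarily oriented
  from tail e to head e. Functions f :: 'e \<Rightarrow> real assign flow to edges (only values on E matter).\<close>

definition net_out :: "'e set \<Rightarrow> ('e \<Rightarrow> 'v) \<Rightarrow> ('e \<Rightarrow> 'v) \<Rightarrow> ('e \<Rightarrow> real) \<Rightarrow> 'v \<Rightarrow> real" where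
  "net_out E tail head f v = (\<Sum>e\<in>E. if tail e = v then f e else 0) - (\<Sum>e\<in>E. if head e = v then f e else 0)"

definition is_st_flow :: "'v set \<Rightarrow> 'e set \<Rightarrow> ('e \<Rightarrow> 'v) \<Rightarrow> ('e \<Rightarrow> 'v) \<Rightarrow> 'v \<Rightarrow> 'v \<Rightarrow> ('e \<Rightarrow> real) \<Rightarrow> bool" where
  "is_st_flow V E tail head s t f \<longleftrightarrow> (\<forall>v\<in>V - {s, t}. net_out E tail head f v = 0)"

definition flow_value :: "'e set \<Rightarrow> ('e \<Rightarrow> 'v) \<Rightarrow> ('e \<Rightarrow> 'v) \<Rightarrow> 'v \<Rightarrow> ('e \<Rightarrow> real) \<Rightarrow> real" where
  "flow_value E tail head s f = net_out E tail head f s"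

definition max_flow_value :: "'v set \<Rightarrow> 'e set \<Rightarrow> ('e \<Rightarrow> 'v) \<Rightarrow> ('e \<Rightarrow> 'v) \<Rightarrow> 'v \<Rightarrow> 'v \<Rightarrow> ('e \<Rightarrow> real) \<Rightarrow> real" where
  "max_flow_value V E tail head s t u =
     Sup {flow_value E tail head s f | f. is_st_flow V E tail head s t f \<and> (\<forall>e\<in>E. \<bar>f e\<bar> \<le> u e)}"

definition energy :: "'e set \<Rightarrow> ('e \<Rightarrow> real) \<Rightarrow> ('e \<Rightarrow> real) \<Rightarrow> real" where
  "energy E r f = (\<Sum>e\<in>E. r e * (f e)\<^sup>2)"

definition cong :: "('e \<Rightarrow> real) \<Rightarrow> ('e \<Rightarrow> real) \<Rightarrow> 'e \<Rightarrow> real" where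
  "cong u f e = \<bar>f e\<bar> / u e"

definition is_electrical_flow :: "'v set \<Rightarrow> 'e set \<Rightarrow> ('e \<Rightarrow> 'v) \<Rightarrow> ('e \<Rightarrow> 'v) \<Rightarrow> 'v \<Rightarrow> 'v \<Rightarrow> ('e \<Rightarrow> real) \<Rightarrow> real \<Rightarrow> ('e \<Rightarrow> real) \<Rightarrow> bool" where
  "is_electrical_flow V E tail head s t r F f \<longleftrightarrow>
     is_st_flow V E tail head s t f \<and> flow_value E tail head s f = F \<and>
     (\<forall>g. is_st_flow V E tail head s t g \<and> flow_value E tail head s g = F \<longrightarrow> energy E r f \<le> energy E r g)"

end

theory Submission
  imports Defs
begin

(*
  Write W = |w|_1, m = |E| and delta = eps W / (3m), so that r_e = (w_e + delta) / u_e^2.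
  Then the energy of a flow g is exactly the sum of (w_e + delta) cong_g(e)^2, and both
  parts of the theorem become statements about this weighted sum of squared congestions.

  (1) A feasible flow (|g e| <= u e) has congestion at most 1 everywhere, hence energy at
      most W + m delta = (1 + eps/3) W.  A maximum flow is approached by feasible flows, and
      rescaling a feasible flow of value x to value F <= F* multiplies its energy by
      (F/x)^2 ~ 1; so the electrical (energy-minimal) flow of value F has energy at most
      (1 + eps/3) W, and a (1 + eps/3)-approximation has energy at most
      (1 + eps/3)^2 W <= (1 + eps) W.
  (2) By AM-GM, w_e c <= (w_e + w_e c^2) / 2, so the weighted congestion is at most
      (W + energy) / 2; and a single term delta c^2 is at most the energy, which bounds c.
*)

text \<open>Flow conservation, flow value and energy are homogeneous in the flow; rescaling a
  flow to a prescribed value is how the maximum flow is compared with the electrical flow.\<close>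

lemma net_out_scale: "net_out E tail head (\<lambda>e. c * g e) v = c * net_out E tail head g v"
  unfolding net_out_def by (simp add: sum_distrib_left right_diff_distrib if_distrib cong: if_cong)

lemma is_st_flow_scale:
  "is_st_flow V E tail head s t g \<Longrightarrow> is_st_flow V E tail head s t (\<lambda>e. c * g e)"
  unfolding is_st_flow_def by (simp add: net_out_scale)

lemma flow_value_scale: "flow_value E tail head s (\<lambda>e. c * g e) = c * flow_value E tail head s g"
  unfolding flow_value_def by (simp add: net_out_scale)

lemma energy_scale: "energy E r (\<lambda>e. c * g e) = c\<^sup>2 * energy E r g"
  unfolding energy_def by (simp add: sum_distrib_left power_mult_distrib algebra_simps)

text \<open>The set of feasible flow values, whose supremum is the maximum flow value.  It contains
  0 for nonnegative capacities, so every number below the supremum is exceeded by some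
  feasible flow value.\<close>

definition feasible_values ::
    "'v set \<Rightarrow> 'e set \<Rightarrow> ('e \<Rightarrow> 'v) \<Rightarrow> ('e \<Rightarrow> 'v) \<Rightarrow> 'v \<Rightarrow> 'v \<Rightarrow> ('e \<Rightarrow> real) \<Rightarrow> real set" where
  "feasible_values V E tail head s t u =
     {flow_value E tail head s f | f. is_st_flow V E tail head s t f \<and> (\<forall>e\<in>E. \<bar>f e\<bar> \<le> u e)}"

lemma zero_in_feasible_values:
  assumes "\<forall>e\<in>E. u e \<ge> 0"
  shows "0 \<in> feasible_values V E tail head s t u"
  unfolding feasible_values_def
  by (rule CollectI, rule exI[of _ "\<lambda>e. 0"])
     (use assms in \<open>auto simp: is_st_flow_def net_out_def flow_value_def\<close>)

lemma electrical_flow_minimal: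
  assumes "is_electrical_flow V E tail head s t r F f"
    and "is_st_flow V E tail head s t g" "flow_value E tail head s g = F"
  shows "energy E r f \<le> energy E r g"
  using assms unfolding is_electrical_flow_def by blast

text \<open>If every feasible s-t flow has energy at most C, then so does the electrical flow of
  any value F with 0 < F \<le> F*: it beats every rescaled feasible flow of value close to F*.\<close>

lemma electrical_energy_le:
  assumes u_nonneg: "\<forall>e\<in>E. u e \<ge> 0"
    and feasible_energy: "\<And>g. is_st_flow V E tail head s t g \<Longrightarrow> \<forall>e\<in>E. \<bar>g e\<bar> \<le> u e \<Longrightarrow>
                                energy E r g \<le> C"
    and F: "0 < F" "F \<le> max_flow_value V E tail head s t u"
    and el: "is_electrical_flow V E tail head s t r F f"
  shows "energy E r f \<le> C"
proof (rule field_le_mult_one_interval)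
  fix z :: real assume z: "0 < z" "z < 1"
  let ?S = "feasible_values V E tail head s t u"
  have "sqrt z * F < F" using z F by simp
  also have "F \<le> Sup ?S"
    using F(2) unfolding max_flow_value_def feasible_values_def .
  finally have "sqrt z * F < Sup ?S" .
  moreover have "?S \<noteq> {}" using zero_in_feasible_values[OF u_nonneg, of V tail head s t] by blast
  ultimately obtain x where "x \<in> ?S" and x_gt: "sqrt z * F < x"
    by (rule less_cSupE)
  then obtain g where g: "is_st_flow V E tail head s t g" "\<forall>e\<in>E. \<bar>g e\<bar> \<le> u e"
    and x_val: "x = flow_value E tail head s g"
    unfolding feasible_values_def by blast
  have "0 \<le> sqrt z * F" using z F by simp
  then have x_pos: "x > 0" using x_gt by linarith
  have C_nonneg: "0 \<le> C"
    using feasible_energy[of "\<lambda>e. 0"] u_nonneg by (simp add: is_st_flow_def net_out_def energy_def)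
  define h where "h = (\<lambda>e. (F / x) * g e)"
  have "is_st_flow V E tail head s t h"
    unfolding h_def by (rule is_st_flow_scale[OF g(1)])
  moreover have "flow_value E tail head s h = F"
    unfolding h_def flow_value_scale x_val[symmetric] using x_pos by simp
  ultimately have "energy E r f \<le> energy E r h"
    by (rule electrical_flow_minimal[OF el])
  also have "\<dots> = (F/x)\<^sup>2 * energy E r g"
    unfolding h_def by (rule energy_scale)
  also have "\<dots> \<le> (F/x)\<^sup>2 * C"
    using feasible_energy[OF g] by (intro mult_left_mono) auto
  finally have f_le: "energy E r f \<le> (F/x)\<^sup>2 * C" .
  have "(sqrt z * F)\<^sup>2 < x\<^sup>2"
    using x_gt z F by (intro power_strict_mono) auto
  then have "z * (F/x)\<^sup>2 \<le> 1"
    using z x_pos by (simp add: power_mult_distrib power_divide field_simps)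
  then have "z * ((F/x)\<^sup>2 * C) \<le> C"
    using C_nonneg mult_right_mono[of "z * (F/x)\<^sup>2" 1 C] by (simp add: mult.assoc)
  moreover have "z * energy E r f \<le> z * ((F/x)\<^sup>2 * C)"
    using f_le z by (intro mult_left_mono) auto
  ultimately show "z * energy E r f \<le> C" by linarith
qed

lemma energy_eq_congestion_sum:
  assumes u_pos: "\<forall>e\<in>E. u e > 0"
    and r_eq: "\<forall>e\<in>E. r e = (w e + \<delta>) / (u e)\<^sup>2"
  shows "energy E r g = (\<Sum>e\<in>E. (w e + \<delta>) * (cong u g e)\<^sup>2)"
  unfolding energy_def cong_def
  by (rule sum.cong) (use u_pos r_eq in \<open>auto simp: power_divide power2_abs\<close>)

text \<open>Feasible flows have congestion at most 1, hence energy at most |w|_1 + m delta.\<close>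

lemma energy_feasible_le:
  assumes u_pos: "\<forall>e\<in>E. u e > 0"
    and r_eq: "\<forall>e\<in>E. r e = (w e + \<delta>) / (u e)\<^sup>2"
    and weights: "\<forall>e\<in>E. w e + \<delta> \<ge> 0"
    and feasible: "\<forall>e\<in>E. \<bar>g e\<bar> \<le> u e"
  shows "energy E r g \<le> (\<Sum>e\<in>E. w e) + real (card E) * \<delta>"
proof -
  have "energy E r g \<le> (\<Sum>e\<in>E. (w e + \<delta>) * 1)"
    unfolding energy_eq_congestion_sum[OF u_pos r_eq]
  proof (rule sum_mono)
    fix e assume e: "e \<in> E"
    have "cong u g e \<le> 1" "0 \<le> cong u g e"
      using feasible u_pos e by (auto simp: cong_def)
    then have "(cong u g e)\<^sup>2 \<le> 1" by (simp add: power_le_one)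
    then show "(w e + \<delta>) * (cong u g e)\<^sup>2 \<le> (w e + \<delta>) * 1"
      using weights e by (intro mult_left_mono) auto
  qed
  then show ?thesis by (simp add: sum.distrib)
qed

text \<open>AM-GM on each edge: the w-weighted congestion is at most (|w|_1 + energy) / 2.\<close>

lemma weighted_congestion_le:
  assumes u_pos: "\<forall>e\<in>E. u e > 0"
    and r_eq: "\<forall>e\<in>E. r e = (w e + \<delta>) / (u e)\<^sup>2"
    and w_nonneg: "\<forall>e\<in>E. w e \<ge> 0" and \<delta>: "\<delta> \<ge> 0"
  shows "(\<Sum>e\<in>E. w e * cong u g e) \<le> ((\<Sum>e\<in>E. w e) + energy E r g) / 2"
proof -
  have "(\<Sum>e\<in>E. w e * cong u g e) \<le> (\<Sum>e\<in>E. (w e + (w e + \<delta>) * (cong u g e)\<^sup>2) / 2)"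
  proof (rule sum_mono)
    fix e assume e: "e \<in> E"
    have "0 \<le> w e * (cong u g e - 1)\<^sup>2 + \<delta> * (cong u g e)\<^sup>2"
      using w_nonneg e \<delta> by simp
    then show "w e * cong u g e \<le> (w e + (w e + \<delta>) * (cong u g e)\<^sup>2) / 2"
      by (simp add: power2_diff algebra_simps)
  qed
  also have "\<dots> = ((\<Sum>e\<in>E. w e) + energy E r g) / 2"
    unfolding energy_eq_congestion_sum[OF u_pos r_eq]
    by (simp add: sum.distrib flip: sum_divide_distrib)
  finally show ?thesis .
qed

lemma congestion_sq_le_energy:
  assumes finE: "finite E" and u_pos: "\<forall>e\<in>E. u e > 0"
    and r_eq: "\<forall>e\<in>E. r e = (w e + \<delta>) / (u e)\<^sup>2"
    and w_nonneg: "\<forall>e\<in>E. w e \<ge> 0" and \<delta>: "\<delta> \<ge> 0" and e: "e \<in> E"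
  shows "\<delta> * (cong u g e)\<^sup>2 \<le> energy E r g"
proof -
  have "\<delta> * (cong u g e)\<^sup>2 \<le> (w e + \<delta>) * (cong u g e)\<^sup>2"
    using w_nonneg e by (intro mult_right_mono) auto
  also have "\<dots> \<le> energy E r g"
    unfolding energy_eq_congestion_sum[OF u_pos r_eq]
    by (rule member_le_sum) (use e w_nonneg \<delta> finE in auto)
  finally show ?thesis .
qed

lemma regularized_feasible_energy_le:
  assumes finE: "finite E" and u_pos: "\<forall>e\<in>E. u e > 0"
    and w_nonneg: "\<forall>e\<in>E. w e \<ge> 0" and eps: "0 \<le> \<epsilon>"
    and r_def: "\<forall>e\<in>E. r e = (w e + \<epsilon> * (\<Sum>e'\<in>E. w e') / (3 * real (card E))) / (u e)\<^sup>2"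
    and feasible: "\<forall>e\<in>E. \<bar>g e\<bar> \<le> u e"
  shows "energy E r g \<le> (1 + \<epsilon>/3) * (\<Sum>e\<in>E. w e)"
proof (cases "E = {}")
  case True
  then show ?thesis by (simp add: energy_def)
next
  case False
  then have m_pos: "real (card E) > 0" using finE by (simp add: card_gt_0_iff)
  have "energy E r g \<le> (\<Sum>e\<in>E. w e) + real (card E) * (\<epsilon> * (\<Sum>e\<in>E. w e) / (3 * real (card E)))"
    by (rule energy_feasible_le[OF u_pos r_def _ feasible])
       (use w_nonneg eps m_pos sum_nonneg[of E w] in simp)
  also have "\<dots> = (1 + \<epsilon>/3) * (\<Sum>e\<in>E. w e)"
    using m_pos by (simp add: field_simps)
  finally show ?thesis .
qed

lemma one_plus_third_squared_le:
  fixes \<epsilon> W :: real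
  assumes "0 \<le> \<epsilon>" "\<epsilon> \<le> 3" "0 \<le> W"
  shows "(1 + \<epsilon>/3) * ((1 + \<epsilon>/3) * W) \<le> (1 + \<epsilon>) * W"
proof -
  have "\<epsilon> * \<epsilon> \<le> 3 * \<epsilon>" using assms by (intro mult_right_mono) auto
  then have "(1 + \<epsilon>/3) * (1 + \<epsilon>/3) \<le> 1 + \<epsilon>" by (simp add: field_simps)
  then have "((1 + \<epsilon>/3) * (1 + \<epsilon>/3)) * W \<le> (1 + \<epsilon>) * W"
    using \<open>0 \<le> W\<close> by (rule mult_right_mono)
  then show ?thesis by (simp only: mult.assoc)
qed

lemma approximate_electrical_energy_le:
  assumes finE: "finite E" and u_pos: "\<forall>e\<in>E. u e > 0"
    and w_nonneg: "\<forall>e\<in>E. w e \<ge> 0" and eps: "0 \<le> \<epsilon>" "\<epsilon> \<le> 3"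
    and r_def: "\<forall>e\<in>E. r e = (w e + \<epsilon> * (\<Sum>e'\<in>E. w e') / (3 * real (card E))) / (u e)\<^sup>2"
    and F: "0 < F" "F \<le> max_flow_value V E tail head s t u"
    and el: "is_electrical_flow V E tail head s t r F f"
    and approx: "energy E r ft \<le> (1 + \<epsilon>/3) * energy E r f"
  shows "energy E r ft \<le> (1 + \<epsilon>) * (\<Sum>e\<in>E. w e)"
proof -
  have u_nonneg: "\<forall>e\<in>E. u e \<ge> 0" using u_pos by (simp add: less_imp_le)
  have feasible_bound: "energy E r g \<le> (1 + \<epsilon>/3) * (\<Sum>e\<in>E. w e)"
    if "is_st_flow V E tail head s t g" "\<forall>e\<in>E. \<bar>g e\<bar> \<le> u e" for g
    by (rule regularized_feasible_energy_le[OF finE u_pos w_nonneg eps(1) r_def that(2)])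
  have "energy E r f \<le> (1 + \<epsilon>/3) * (\<Sum>e\<in>E. w e)"
    by (rule electrical_energy_le[OF u_nonneg feasible_bound F el])
  then have "(1 + \<epsilon>/3) * energy E r f \<le> (1 + \<epsilon>/3) * ((1 + \<epsilon>/3) * (\<Sum>e\<in>E. w e))"
    using eps by (intro mult_left_mono) auto
  with approx have "energy E r ft \<le> (1 + \<epsilon>/3) * ((1 + \<epsilon>/3) * (\<Sum>e\<in>E. w e))"
    by (rule order_trans)
  also have "\<dots> \<le> (1 + \<epsilon>) * (\<Sum>e\<in>E. w e)"
    by (rule one_plus_third_squared_le) (use eps w_nonneg sum_nonneg[of E w] in auto)
  finally show ?thesis .
qed

text \<open>The congestion bound: delta c^2 \<le> (1 + eps) |w|_1 with delta = eps |w|_1 / (3m)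
  gives c^2 \<le> 3 (1 + eps) m / eps \<le> 9 m / eps.\<close>

lemma congestion_bound_arith:
  fixes c W \<epsilon> m :: real
  assumes "0 < \<epsilon>" "\<epsilon> \<le> 2" "0 < W" "0 < m"
    and "\<epsilon> * W / (3 * m) * c\<^sup>2 \<le> (1 + \<epsilon>) * W"
  shows "c \<le> 3 * sqrt (m / \<epsilon>)"
proof -
  have "W * (\<epsilon> * c\<^sup>2) \<le> W * (3 * (1 + \<epsilon>) * m)"
    using assms by (simp add: field_simps)
  then have "\<epsilon> * c\<^sup>2 \<le> 3 * (1 + \<epsilon>) * m"
    using \<open>0 < W\<close> by simp
  then have "c\<^sup>2 \<le> 3 * (1 + \<epsilon>) * m / \<epsilon>"
    using \<open>0 < \<epsilon>\<close> by (simp add: pos_le_divide_eq mult.commute)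
  also have "\<dots> \<le> 9 * m / \<epsilon>"
    using assms by (simp add: divide_right_mono)
  also have "\<dots> = (3 * sqrt (m / \<epsilon>))\<^sup>2"
    using assms by (simp add: power_mult_distrib)
  finally show ?thesis
    by (rule power2_le_imp_le) (use assms in simp)
qed

lemma regularized_congestion_bounds:
  assumes finE: "finite E" and u_pos: "\<forall>e\<in>E. u e > 0"
    and w_pos: "\<forall>e\<in>E. w e > 0" and eps: "0 < \<epsilon>" "\<epsilon> \<le> 2"
    and r_def: "\<forall>e\<in>E. r e = (w e + \<epsilon> * (\<Sum>e'\<in>E. w e') / (3 * real (card E))) / (u e)\<^sup>2"
    and g: "energy E r g \<le> (1 + \<epsilon>) * (\<Sum>e\<in>E. w e)"
  shows "(\<Sum>e\<in>E. w e * cong u g e) \<le> (1 + \<epsilon>) * (\<Sum>e\<in>E. w e)"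
    and "\<forall>e\<in>E. cong u g e \<le> 3 * sqrt (real (card E) / \<epsilon>)"
proof -
  define W where "W = (\<Sum>e\<in>E. w e)"
  define \<delta> where "\<delta> = \<epsilon> * W / (3 * real (card E))"
  have w_nonneg: "\<forall>e\<in>E. w e \<ge> 0" using w_pos by (simp add: less_imp_le)
  have W_nonneg: "W \<ge> 0" unfolding W_def using w_nonneg by (simp add: sum_nonneg)
  have \<delta>_nonneg: "\<delta> \<ge> 0" unfolding \<delta>_def using W_nonneg eps by simp
  have r_eq: "\<forall>e\<in>E. r e = (w e + \<delta>) / (u e)\<^sup>2" using r_def unfolding \<delta>_def W_def by simp
  have "(\<Sum>e\<in>E. w e * cong u g e) \<le> (W + energy E r g) / 2"
    using weighted_congestion_le[OF u_pos r_eq w_nonneg \<delta>_nonneg] unfolding W_def by simp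
  also have "\<dots> \<le> (1 + \<epsilon>) * W"
    using g mult_nonneg_nonneg[OF less_imp_le[OF eps(1)] W_nonneg] unfolding W_def[symmetric]
    by (simp add: algebra_simps)
  finally show "(\<Sum>e\<in>E. w e * cong u g e) \<le> (1 + \<epsilon>) * (\<Sum>e\<in>E. w e)"
    unfolding W_def .
  show "\<forall>e\<in>E. cong u g e \<le> 3 * sqrt (real (card E) / \<epsilon>)"
  proof
    fix e assume e: "e \<in> E"
    then have m_pos: "real (card E) > 0" using finE card_gt_0_iff by fastforce
    have W_pos: "W > 0" unfolding W_def using w_pos e finE by (intro sum_pos) auto
    have "\<delta> * (cong u g e)\<^sup>2 \<le> (1 + \<epsilon>) * W"
      using order_trans[OF congestion_sq_le_energy[OF finE u_pos r_eq w_nonneg \<delta>_nonneg e] g]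
      unfolding W_def .
    then show "cong u g e \<le> 3 * sqrt (real (card E) / \<epsilon>)"
      using congestion_bound_arith eps W_pos m_pos unfolding \<delta>_def by simp
  qed
qed

theorem mainTheorem9:
  fixes V :: "'v set" and E :: "'e set" and tail head :: "'e \<Rightarrow> 'v" and s t :: 'v
    and u w r :: "'e \<Rightarrow> real" and \<epsilon> :: real
  assumes finV: "finite V" and finE: "finite E"
    and endpoints: "\<forall>e\<in>E. tail e \<in> V \<and> head e \<in> V"
    and st: "s \<in> V" "t \<in> V" "s \<noteq> t"
    and u_pos: "\<forall>e\<in>E. u e > 0"
    and eps: "0 < \<epsilon>" "\<epsilon> < 1/2"
    and w_pos: "\<forall>e\<in>E. w e > 0"
    and r_def: "\<forall>e\<in>E. r e = (w e + \<epsilon> * (\<Sum>e'\<in>E. w e') / (3 * real (card E))) / (u e)\<^sup>2"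
  shows
    "(\<forall>F f ft. 0 < F \<and> F \<le> max_flow_value V E tail head s t u
        \<and> is_electrical_flow V E tail head s t r F f
        \<and> is_st_flow V E tail head s t ft \<and> flow_value E tail head s ft = F
        \<and> energy E r ft \<le> (1 + \<epsilon>/3) * energy E r f
        \<longrightarrow> energy E r ft \<le> (1 + \<epsilon>) * (\<Sum>e\<in>E. w e))
     \<and> (\<forall>g. is_st_flow V E tail head s t g \<and> energy E r g \<le> (1 + \<epsilon>) * (\<Sum>e\<in>E. w e)
        \<longrightarrow> (\<Sum>e\<in>E. w e * cong u g e) \<le> (1 + \<epsilon>) * (\<Sum>e\<in>E. w e)
          \<and> (\<forall>e\<in>E. cong u g e \<le> 3 * sqrt (real (card E) / \<epsilon>)))"
proof (intro conjI allI impI)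
  fix F f ft
  assume "0 < F \<and> F \<le> max_flow_value V E tail head s t u
      \<and> is_electrical_flow V E tail head s t r F f
      \<and> is_st_flow V E tail head s t ft \<and> flow_value E tail head s ft = F
      \<and> energy E r ft \<le> (1 + \<epsilon>/3) * energy E r f"
  then have F: "0 < F" "F \<le> max_flow_value V E tail head s t u"
    and el: "is_electrical_flow V E tail head s t r F f"
    and approx: "energy E r ft \<le> (1 + \<epsilon>/3) * energy E r f"
    by simp_all
  show "energy E r ft \<le> (1 + \<epsilon>) * (\<Sum>e\<in>E. w e)"
    using approximate_electrical_energy_le[OF finE u_pos _ _ _ r_def F el approx] w_pos eps
    by (simp add: less_imp_le)
next
  fix g
  assume "is_st_flow V E tail head s t g \<and> energy E r g \<le> (1 + \<epsilon>) * (\<Sum>e\<in>E. w e)"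
  then have g: "energy E r g \<le> (1 + \<epsilon>) * (\<Sum>e\<in>E. w e)" by simp
  have eps': "\<epsilon> \<le> 2" using eps by simp
  show "(\<Sum>e\<in>E. w e * cong u g e) \<le> (1 + \<epsilon>) * (\<Sum>e\<in>E. w e)"
    and "\<forall>e\<in>E. cong u g e \<le> 3 * sqrt (real (card E) / \<epsilon>)"
    using regularized_congestion_bounds[OF finE u_pos w_pos eps(1) eps' r_def g] by blast+
qed

end
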